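(* Let $(TN,\mu_0)$ be a perpetual $T$-system with regeneration cluster $cl$. Then for any two markings $\mu_1,\mu_2$ reachable in $(TN,\mu_0)$, $$en(TN,\mu_1)=en(TN,\mu_2)\implies\mu_1=\mu_2.$$
   Context: A net consists of finite disjoint sets of places and transitions and directed edges between places and transitions (no place–place or transition–transition edges); nets are weakly connected. ${}^\bullet x$, $x^\bullet$ are pre-set and post-set of a node. A $T$-net is a net in which every place has exactly one pre-transition and exactly one post-transition; a $T$-system is a $T$-net with a marking (map from places to $\mathbb{N}$). A transition is enabled if all its pre-places are marked; firing removes one token from each pre-place and adds one to each post-place. $en(TN,\mu)$ is the set of transitions enabled at $\mu$; reachable markings arise from $\mu_0$ by firing finite sequences of successively enabled transitions. The cluster of a node $x$ is the smallest subnet containing $x$ containing $p^\bullet$ for each of its places $p$ and ${}^\bullet t$ for each of its transitions $t$; $\mu_{cl}$ is the marking equal to $1$ on the places of $cl$ and $0$ elsewhere. $(TN,\mu_0)$ is perpetual with regeneration cluster $cl$ if it is live and bounded and $\mu_{cl}$ is a home marking (reachable from every reachable marking). *)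

theory Defs
  imports Main
begin

definition preset :: "('a \<times> 'a) set \<Rightarrow> 'a \<Rightarrow> 'a set" where
  "preset F x = {y. (y, x) \<in> F}"

definition postset :: "('a \<times> 'a) set \<Rightarrow> 'a \<Rightarrow> 'a set" where
  "postset F x = {y. (x, y) \<in> F}"

definition is_net :: "'a set \<Rightarrow> 'a set \<Rightarrow> ('a \<times> 'a) set \<Rightarrow> bool" where
  "is_net P T F \<longleftrightarrow> finite P \<and> finite T \<and> P \<inter> T = {} \<and>
     F \<subseteq> (P \<times> T) \<union> (T \<times> P) \<and>
     (\<forall>x \<in> P \<union> T. \<forall>y \<in> P \<union> T. (x, y) \<in> (F \<union> F\<inverse>)\<^sup>*)"

definition is_Tnet :: "'a set \<Rightarrow> 'a set \<Rightarrow> ('a \<times> 'a) set \<Rightarrow> bool" where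
  "is_Tnet P T F \<longleftrightarrow> is_net P T F \<and>
     (\<forall>p \<in> P. card (preset F p) = 1 \<and> card (postset F p) = 1)"

definition is_marking :: "'a set \<Rightarrow> ('a \<Rightarrow> nat) \<Rightarrow> bool" where
  "is_marking P \<mu> \<longleftrightarrow> (\<forall>x. x \<notin> P \<longrightarrow> \<mu> x = 0)"

definition enabled :: "'a set \<Rightarrow> ('a \<times> 'a) set \<Rightarrow> ('a \<Rightarrow> nat) \<Rightarrow> 'a \<Rightarrow> bool" where
  "enabled T F \<mu> t \<longleftrightarrow> t \<in> T \<and> (\<forall>p \<in> preset F t. 0 < \<mu> p)"

definition en :: "'a set \<Rightarrow> ('a \<times> 'a) set \<Rightarrow> ('a \<Rightarrow> nat) \<Rightarrow> 'a set" where
  "en T F \<mu> = {t. enabled T F \<mu> t}"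

definition fire :: "('a \<times> 'a) set \<Rightarrow> ('a \<Rightarrow> nat) \<Rightarrow> 'a \<Rightarrow> ('a \<Rightarrow> nat)" where
  "fire F \<mu> t = (\<lambda>p. \<mu> p - (if p \<in> preset F t then 1 else 0)
                         + (if p \<in> postset F t then 1 else 0))"

definition step :: "'a set \<Rightarrow> ('a \<times> 'a) set \<Rightarrow> ('a \<Rightarrow> nat) \<Rightarrow> ('a \<Rightarrow> nat) \<Rightarrow> bool" where
  "step T F \<mu> \<mu>' \<longleftrightarrow> (\<exists>t. enabled T F \<mu> t \<and> \<mu>' = fire F \<mu> t)"

definition reach :: "'a set \<Rightarrow> ('a \<times> 'a) set \<Rightarrow> ('a \<Rightarrow> nat) \<Rightarrow> ('a \<Rightarrow> nat) \<Rightarrow> bool" where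
  "reach T F = (step T F)\<^sup>*\<^sup>*"

definition live :: "'a set \<Rightarrow> ('a \<times> 'a) set \<Rightarrow> ('a \<Rightarrow> nat) \<Rightarrow> bool" where
  "live T F \<mu>0 \<longleftrightarrow> (\<forall>\<mu> t. reach T F \<mu>0 \<mu> \<and> t \<in> T \<longrightarrow>
      (\<exists>\<mu>'. reach T F \<mu> \<mu>' \<and> enabled T F \<mu>' t))"

definition bounded :: "'a set \<Rightarrow> 'a set \<Rightarrow> ('a \<times> 'a) set \<Rightarrow> ('a \<Rightarrow> nat) \<Rightarrow> bool" where
  "bounded P T F \<mu>0 \<longleftrightarrow> (\<exists>k. \<forall>\<mu> p. reach T F \<mu>0 \<mu> \<and> p \<in> P \<longrightarrow> \<mu> p \<le> k)"

definition home_marking :: "'a set \<Rightarrow> ('a \<times> 'a) set \<Rightarrow> ('a \<Rightarrow> nat) \<Rightarrow> ('a \<Rightarrow> nat) \<Rightarrow> bool" where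
  "home_marking T F \<mu>0 \<mu>h \<longleftrightarrow> (\<forall>\<mu>. reach T F \<mu>0 \<mu> \<longrightarrow> reach T F \<mu> \<mu>h)"

inductive_set cluster :: "'a set \<Rightarrow> 'a set \<Rightarrow> ('a \<times> 'a) set \<Rightarrow> 'a \<Rightarrow> 'a set"
  for P T F x where
  self: "x \<in> cluster P T F x"
| post: "p \<in> cluster P T F x \<Longrightarrow> p \<in> P \<Longrightarrow> y \<in> postset F p \<Longrightarrow> y \<in> cluster P T F x"
| pre: "t \<in> cluster P T F x \<Longrightarrow> t \<in> T \<Longrightarrow> y \<in> preset F t \<Longrightarrow> y \<in> cluster P T F x"

definition mu_cl :: "'a set \<Rightarrow> 'a set \<Rightarrow> 'a \<Rightarrow> nat" where
  "mu_cl P cl = (\<lambda>p. if p \<in> P \<and> p \<in> cl then 1 else 0)"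

definition perpetual :: "'a set \<Rightarrow> 'a set \<Rightarrow> ('a \<times> 'a) set \<Rightarrow> ('a \<Rightarrow> nat) \<Rightarrow> 'a set \<Rightarrow> bool" where
  "perpetual P T F \<mu>0 cl \<longleftrightarrow> (\<exists>x \<in> P \<union> T. cl = cluster P T F x) \<and>
     live T F \<mu>0 \<and> bounded P T F \<mu>0 \<and> home_marking T F \<mu>0 (mu_cl P cl)"

end

theory Submission
  imports Defs
begin

(* Fix the transition t0 of the regeneration cluster, so that the home marking puts one token
   on each input place of t0. Counting, on a firing sequence from a reachable marking back to
   the home marking, how much more often t0 fires than t gives an integer potential Z with
   Z t0 = 0 and mu p = [p feeds t0] + Z (pre-transition of p) - Z (post-transition of p).
   Boundedness and liveness force Z into {-1, 0}: a positive maximum makes the input places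
   of the maximal transitions an empty siphon, and a minimum below -1 yields, by strong
   connectedness, a place with a negative marking. If two reachable markings enable the same
   transitions, the transitions where their potentials differ again carry an empty siphon;
   so the potentials, and hence the markings, agree. *)

definition siphon :: "('a \<times> 'a) set \<Rightarrow> 'a set \<Rightarrow> bool" where
  "siphon F S \<longleftrightarrow> (\<Union>p\<in>S. preset F p) \<subseteq> (\<Union>p\<in>S. postset F p)"

fun firing_seq :: "'a set \<Rightarrow> ('a \<times> 'a) set \<Rightarrow> ('a \<Rightarrow> nat) \<Rightarrow> 'a list \<Rightarrow> ('a \<Rightarrow> nat) \<Rightarrow> bool" where
  "firing_seq T F \<mu> [] \<mu>' \<longleftrightarrow> \<mu>' = \<mu>"
| "firing_seq T F \<mu> (t # ts) \<mu>' \<longleftrightarrow> enabled T F \<mu> t \<and> firing_seq T F (fire F \<mu> t) ts \<mu>'"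

lemma firing_seq_append:
  "firing_seq T F \<mu> (ts @ us) \<mu>'' \<longleftrightarrow> (\<exists>\<mu>'. firing_seq T F \<mu> ts \<mu>' \<and> firing_seq T F \<mu>' us \<mu>'')"
  by (induction ts arbitrary: \<mu>) auto

lemma reach_iff_firing_seq: "reach T F \<mu> \<mu>' \<longleftrightarrow> (\<exists>ts. firing_seq T F \<mu> ts \<mu>')"
proof
  assume "reach T F \<mu> \<mu>'"
  then show "\<exists>ts. firing_seq T F \<mu> ts \<mu>'"
    unfolding reach_def
  proof (induction rule: rtranclp_induct)
    case base
    show ?case using firing_seq.simps(1) by blast
  next
    case (step \<nu> \<nu>')
    then obtain ts t where "firing_seq T F \<mu> ts \<nu>" "enabled T F \<nu> t" "\<nu>' = fire F \<nu> t"
      by (auto simp: step_def)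
    then have "firing_seq T F \<mu> (ts @ [t]) \<nu>'" by (auto simp: firing_seq_append)
    then show ?case by blast
  qed
next
  assume "\<exists>ts. firing_seq T F \<mu> ts \<mu>'"
  then obtain ts where "firing_seq T F \<mu> ts \<mu>'" by blast
  then show "reach T F \<mu> \<mu>'"
  proof (induction ts arbitrary: \<mu>)
    case Nil
    then show ?case by (simp add: reach_def)
  next
    case (Cons t ts)
    then have "step T F \<mu> (fire F \<mu> t)" "reach T F (fire F \<mu> t) \<mu>'"
      by (auto simp: step_def)
    then show ?case unfolding reach_def by (meson converse_rtranclp_into_rtranclp)
  qed
qed

lemma reach_is_marking:
  assumes "is_net P T F" "is_marking P \<mu>" "reach T F \<mu> \<mu>'"
  shows "is_marking P \<mu>'"
  using assms(3) unfolding reach_def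
proof (induction rule: rtranclp_induct)
  case base
  show ?case using assms(2) .
next
  case (step \<nu> \<nu>')
  then obtain t where t: "t \<in> T" "\<nu>' = fire F \<nu> t" by (auto simp: step_def enabled_def)
  have "preset F t \<union> postset F t \<subseteq> P"
    using t(1) assms(1) by (auto simp: is_net_def preset_def postset_def)
  then show ?case using step.IH t(2) by (auto simp: is_marking_def fire_def)
qed

lemma reach_siphon_empty:
  assumes "siphon F S" "\<forall>p\<in>S. \<mu> p = 0" "reach T F \<mu> \<nu>"
  shows "\<forall>p\<in>S. \<nu> p = 0"
  using assms(3) unfolding reach_def
proof (induction rule: rtranclp_induct)
  case base
  show ?case using assms(2) .
next
  case (step \<nu> \<nu>')
  then obtain t where t: "enabled T F \<nu> t" "\<nu>' = fire F \<nu> t" by (auto simp: step_def)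
  have "p \<notin> postset F t" if "p \<in> S" for p
  proof
    assume "p \<in> postset F t"
    then have "t \<in> (\<Union>p\<in>S. preset F p)" using that by (auto simp: preset_def postset_def)
    then obtain q where "q \<in> S" "q \<in> preset F t"
      using assms(1) by (auto simp: siphon_def preset_def postset_def)
    then show False using t(1) step.IH by (auto simp: enabled_def)
  qed
  then show ?case using step.IH t(2) by (simp add: fire_def)
qed

lemma live_siphon_empty_not_input:
  assumes "live T F \<mu>0" "reach T F \<mu>0 \<mu>" "siphon F S" "\<forall>p\<in>S. \<mu> p = 0" "t \<in> T"
  shows "preset F t \<inter> S = {}"
proof -
  obtain \<nu> where \<nu>: "reach T F \<mu> \<nu>" "enabled T F \<nu> t"
    using assms(1,2,5) unfolding live_def by blast
  then show ?thesis using reach_siphon_empty[OF assms(3,4) \<nu>(1)] by (auto simp: enabled_def)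
qed

lemma flow_closed_set_contains_nodes:
  assumes "is_net P T F" "x \<in> P \<union> T" "x \<in> S" "\<And>a b. (a, b) \<in> F \<Longrightarrow> a \<in> S \<longleftrightarrow> b \<in> S"
  shows "P \<union> T \<subseteq> S"
proof
  fix y assume "y \<in> P \<union> T"
  then have "(x, y) \<in> (F \<union> F\<inverse>)\<^sup>*" using assms(1,2) by (simp add: is_net_def)
  then show "y \<in> S" by induction (use assms(3,4) in auto)
qed

definition pre_trans :: "('a \<times> 'a) set \<Rightarrow> 'a \<Rightarrow> 'a" where
  "pre_trans F p = (THE t. (t, p) \<in> F)"

definition post_trans :: "('a \<times> 'a) set \<Rightarrow> 'a \<Rightarrow> 'a" where
  "post_trans F p = (THE t. (p, t) \<in> F)"

locale tnet =
  fixes P T :: "'a set" and F :: "('a \<times> 'a) set"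
  assumes Tnet: "is_Tnet P T F"
begin

lemma net: "is_net P T F"
  using Tnet by (simp add: is_Tnet_def)

lemma finite_T: "finite T" and places_transitions_disjoint: "P \<inter> T = {}"
  and flow_subset: "F \<subseteq> (P \<times> T) \<union> (T \<times> P)"
  using net by (auto simp: is_net_def)

lemma preset_place: "p \<in> P \<Longrightarrow> preset F p = {pre_trans F p}"
proof -
  assume "p \<in> P"
  then obtain t where t: "preset F p = {t}"
    using Tnet by (auto simp: is_Tnet_def card_1_singleton_iff)
  then have "pre_trans F p = t" by (auto simp: pre_trans_def preset_def)
  then show ?thesis using t by simp
qed

lemma postset_place: "p \<in> P \<Longrightarrow> postset F p = {post_trans F p}"
proof -
  assume "p \<in> P"
  then obtain t where t: "postset F p = {t}"
    using Tnet by (auto simp: is_Tnet_def card_1_singleton_iff)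
  then have "post_trans F p = t" by (auto simp: post_trans_def postset_def)
  then show ?thesis using t by simp
qed

lemma in_flow_to_place: "p \<in> P \<Longrightarrow> (t, p) \<in> F \<longleftrightarrow> t = pre_trans F p"
  using preset_place[of p] by (auto simp: preset_def)

lemma in_flow_from_place: "p \<in> P \<Longrightarrow> (p, t) \<in> F \<longleftrightarrow> t = post_trans F p"
  using postset_place[of p] by (auto simp: postset_def)

lemma pre_trans_in_T: "p \<in> P \<Longrightarrow> pre_trans F p \<in> T"
  using in_flow_to_place[of p "pre_trans F p"] flow_subset places_transitions_disjoint by auto

lemma post_trans_in_T: "p \<in> P \<Longrightarrow> post_trans F p \<in> T"
  using in_flow_from_place[of p "post_trans F p"] flow_subset places_transitions_disjoint by auto

lemma preset_transition: "t \<in> T \<Longrightarrow> q \<in> preset F t \<longleftrightarrow> q \<in> P \<and> post_trans F q = t"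
  using flow_subset places_transitions_disjoint in_flow_from_place by (auto simp: preset_def)

lemma postset_transition: "t \<in> T \<Longrightarrow> q \<in> postset F t \<longleftrightarrow> q \<in> P \<and> pre_trans F q = t"
  using flow_subset places_transitions_disjoint in_flow_to_place by (auto simp: postset_def)

lemma enabled_iff:
  "enabled T F \<mu> t \<longleftrightarrow> t \<in> T \<and> (\<forall>q\<in>P. post_trans F q = t \<longrightarrow> 0 < \<mu> q)"
  by (auto simp: enabled_def preset_transition)

lemma fire_place:
  "t \<in> T \<Longrightarrow> p \<in> P \<Longrightarrow>
   fire F \<mu> t p = \<mu> p - of_bool (post_trans F p = t) + of_bool (pre_trans F p = t)"
  by (simp add: fire_def preset_transition postset_transition)

lemma marking_equation:
  "firing_seq T F \<mu> ts \<mu>' \<Longrightarrow> p \<in> P \<Longrightarrow>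
   int (\<mu>' p) = int (\<mu> p) + int (count_list ts (pre_trans F p)) - int (count_list ts (post_trans F p))"
proof (induction ts arbitrary: \<mu>)
  case Nil
  then show ?case by simp
next
  case (Cons t ts)
  then have en: "enabled T F \<mu> t" and seq: "firing_seq T F (fire F \<mu> t) ts \<mu>'" by auto
  then have "t \<in> T" "post_trans F p = t \<Longrightarrow> 0 < \<mu> p"
    using Cons.prems(2) by (auto simp: enabled_iff)
  then have "int (fire F \<mu> t p) = int (\<mu> p) - of_bool (post_trans F p = t) + of_bool (pre_trans F p = t)"
    using fire_place[of t p \<mu>] Cons.prems(2) by auto
  then show ?case using Cons.IH[OF seq Cons.prems(2)] by auto
qed

lemma siphon_iff:
  assumes "S \<subseteq> P"
  shows "siphon F S \<longleftrightarrow> (\<forall>p\<in>S. \<exists>q\<in>S. post_trans F q = pre_trans F p)"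
proof -
  have "(\<Union>p\<in>S. preset F p) = (\<Union>p\<in>S. {pre_trans F p})"
    "(\<Union>p\<in>S. postset F p) = (\<Union>p\<in>S. {post_trans F p})"
    using assms preset_place postset_place by (auto intro!: SUP_cong)
  then show ?thesis unfolding siphon_def by (simp add: UN_subset_iff eq_commute)
qed

lemma cluster_eq_insert_preset:
  assumes "x \<in> P \<union> T"
  shows "\<exists>t\<in>T. cluster P T F x = insert t (preset F t)"
proof
  define t where "t = (if x \<in> T then x else post_trans F x)"
  show tT: "t \<in> T" using assms post_trans_in_T by (auto simp: t_def)
  have x_in: "x \<in> insert t (preset F t)"
    using assms preset_transition[OF tT] by (auto simp: t_def)
  have "y \<in> insert t (preset F t)" if "y \<in> cluster P T F x" for y
    using that
  proof induction
    case self
    show ?case using x_in .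
  next
    case (post p y)
    then have "post_trans F p = t"
      using places_transitions_disjoint tT preset_transition[OF tT] by auto
    then show ?case using post.hyps(2,3) postset_place by auto
  next
    case (pre s y)
    have "s \<notin> P" using pre.hyps(2) places_transitions_disjoint by blast
    then have "s \<notin> preset F t" using preset_transition[OF tT] by simp
    then have "s = t" using pre.IH by blast
    then show ?case using pre.hyps(3) by simp
  qed
  moreover have t_in: "t \<in> cluster P T F x"
  proof (cases "x \<in> T")
    case True
    then show ?thesis by (simp add: t_def cluster.self)
  next
    case False
    then have "x \<in> P" using assms by blast
    then have "t \<in> postset F x" using False postset_place by (simp add: t_def)
    then show ?thesis using cluster.post[OF cluster.self \<open>x \<in> P\<close>] by blast
  qed
  then have "preset F t \<subseteq> cluster P T F x"
    using cluster.pre[OF t_in tT] by blast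
  ultimately show "cluster P T F x = insert t (preset F t)"
    using t_in by blast
qed

lemma connected_cut:
  assumes "M \<subseteq> T" "t \<in> M" "t' \<in> T" "t' \<notin> M"
  shows "\<exists>p\<in>P. (pre_trans F p \<in> M) \<noteq> (post_trans F p \<in> M)"
proof (rule ccontr)
  assume no_cut: "\<not> ?thesis"
  define S where "S = M \<union> {p\<in>P. post_trans F p \<in> M}"
  have closed: "a \<in> S \<longleftrightarrow> b \<in> S" if ab: "(a, b) \<in> F" for a b
  proof -
    consider "a \<in> P" "b = post_trans F a" | "b \<in> P" "a = pre_trans F b"
      using ab flow_subset in_flow_from_place in_flow_to_place by blast
    then show ?thesis
    proof cases
      case 1
      then show ?thesis
        using assms(1) post_trans_in_T places_transitions_disjoint by (auto simp: S_def)
    next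
      case 2
      then show ?thesis
        using no_cut assms(1) pre_trans_in_T places_transitions_disjoint by (auto simp: S_def)
    qed
  qed
  have "t \<in> P \<union> T" "t \<in> S" using assms(1,2) by (auto simp: S_def)
  then have "P \<union> T \<subseteq> S" using flow_closed_set_contains_nodes[OF net _ _ closed] by blast
  then show False using assms(3,4) places_transitions_disjoint by (auto simp: S_def)
qed

lemma firing_seq_restrict:
  assumes closed: "\<forall>q\<in>P. post_trans F q \<in> N \<longrightarrow> pre_trans F q \<in> N"
    and "firing_seq T F \<mu> ts \<mu>'" and "\<forall>q\<in>P. post_trans F q \<in> N \<longrightarrow> \<nu> q = \<mu> q"
  shows "\<exists>\<nu>'. firing_seq T F \<nu> (filter (\<lambda>t. t \<in> N) ts) \<nu>' \<and>
    (\<forall>q\<in>P. post_trans F q \<in> N \<longrightarrow> \<nu>' q = \<mu>' q)"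
  using assms(2,3)
proof (induction ts arbitrary: \<mu> \<nu>)
  case Nil
  then show ?case by auto
next
  case (Cons t ts)
  then have en: "enabled T F \<mu> t" and seq: "firing_seq T F (fire F \<mu> t) ts \<mu>'" by auto
  then have tT: "t \<in> T" by (simp add: enabled_def)
  show ?case
  proof (cases "t \<in> N")
    case True
    then have "enabled T F \<nu> t" using en Cons.prems(2) by (auto simp: enabled_iff)
    moreover have "\<forall>q\<in>P. post_trans F q \<in> N \<longrightarrow> fire F \<nu> t q = fire F \<mu> t q"
      using Cons.prems(2) by (simp add: fire_place[OF tT])
    ultimately show ?thesis using True Cons.IH[OF seq] by auto
  next
    case False
    then have "\<forall>q\<in>P. post_trans F q \<in> N \<longrightarrow> \<nu> q = fire F \<mu> t q"
      using Cons.prems(2) closed by (auto simp: fire_place[OF tT])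
    then show ?thesis using False Cons.IH[OF seq] by simp
  qed
qed

end

locale live_bounded_tsys = tnet P T F for P T :: "'a set" and F +
  fixes \<mu>0 :: "'a \<Rightarrow> nat"
  assumes live: "live T F \<mu>0" and bounded: "bounded P T F \<mu>0"
begin

lemma firing_seq_pump:
  assumes "N \<subseteq> T" "\<forall>q\<in>P. post_trans F q \<in> N \<longrightarrow> pre_trans F q \<in> N" "t \<in> N"
  shows "\<exists>ts \<nu>. firing_seq T F \<mu>0 ts \<nu> \<and> set ts \<subseteq> N \<and> k \<le> count_list ts t"
proof (induction k)
  case 0
  show ?case using firing_seq.simps(1) by fastforce
next
  case (Suc k)
  then obtain ts \<nu> where seq: "firing_seq T F \<mu>0 ts \<nu>" "set ts \<subseteq> N" "k \<le> count_list ts t"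
    by blast
  then have "reach T F \<mu>0 \<nu>" by (auto simp: reach_iff_firing_seq)
  then obtain \<nu>' us where us: "firing_seq T F \<nu> us \<nu>'" "enabled T F \<nu>' t"
    using live assms(1,3) unfolding live_def reach_iff_firing_seq by blast
  obtain \<nu>'' where \<nu>'': "firing_seq T F \<nu> (filter (\<lambda>s. s \<in> N) us) \<nu>''"
    "\<forall>q\<in>P. post_trans F q \<in> N \<longrightarrow> \<nu>'' q = \<nu>' q"
    using firing_seq_restrict[OF assms(2) us(1)] by blast
  have "enabled T F \<nu>'' t" using us(2) \<nu>''(2) assms(3) by (auto simp: enabled_iff)
  then have "firing_seq T F \<mu>0 (ts @ filter (\<lambda>s. s \<in> N) us @ [t]) (fire F \<nu>'' t)"
    using seq(1) \<nu>''(1) by (auto simp: firing_seq_append)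
  moreover have "set (ts @ filter (\<lambda>s. s \<in> N) us @ [t]) \<subseteq> N" using seq(2) assms(3) by auto
  moreover have "Suc k \<le> count_list (ts @ filter (\<lambda>s. s \<in> N) us @ [t]) t" using seq(3) by simp
  ultimately show ?case by blast
qed

text \<open>Pumping the transitions of \<open>N\<close> would flood any place leading out of \<open>N\<close>.\<close>
lemma backward_closed_no_exit:
  assumes "N \<subseteq> T" "\<forall>q\<in>P. post_trans F q \<in> N \<longrightarrow> pre_trans F q \<in> N"
    and "p \<in> P" "pre_trans F p \<in> N"
  shows "post_trans F p \<in> N"
proof (rule ccontr)
  assume out: "post_trans F p \<notin> N"
  obtain K where K: "\<And>\<mu>. reach T F \<mu>0 \<mu> \<Longrightarrow> \<mu> p \<le> K"
    using bounded assms(3) by (auto simp: bounded_def)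
  obtain ts \<nu> where seq: "firing_seq T F \<mu>0 ts \<nu>" "set ts \<subseteq> N"
    "Suc K \<le> count_list ts (pre_trans F p)"
    using firing_seq_pump[OF assms(1,2,4)] by blast
  have "count_list ts (post_trans F p) = 0" using seq(2) out by (auto simp: count_list_0_iff)
  then have "Suc K \<le> \<nu> p" using marking_equation[OF seq(1) assms(3)] seq(3) by simp
  moreover have "reach T F \<mu>0 \<nu>" using seq(1) by (auto simp: reach_iff_firing_seq)
  ultimately show False using K by (meson not_less_eq_eq)
qed

lemma strongly_connected_cut:
  assumes "M \<subseteq> T" "t \<in> M" "t' \<in> T" "t' \<notin> M"
  shows "\<exists>p\<in>P. pre_trans F p \<in> M \<and> post_trans F p \<notin> M"
proof (rule ccontr)
  assume none: "\<not> ?thesis"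
  then have "\<forall>q\<in>P. post_trans F q \<in> T - M \<longrightarrow> pre_trans F q \<in> T - M"
    using pre_trans_in_T by blast
  moreover obtain p where "p \<in> P" "pre_trans F p \<in> T - M" "post_trans F p \<in> M"
    using connected_cut[OF assms] none pre_trans_in_T by blast
  ultimately show False using backward_closed_no_exit[of "T - M" p] by blast
qed

lemma unmarked_siphon_empty:
  assumes "reach T F \<mu>0 \<mu>" "S \<subseteq> P" "siphon F S" "\<forall>p\<in>S. \<mu> p = 0"
  shows "S = {}"
proof -
  have "q \<notin> S" if "q \<in> P" for q
    using live_siphon_empty_not_input[OF live assms(1,3,4) post_trans_in_T[OF that]]
      preset_transition[OF post_trans_in_T[OF that]] that by blast
  then show ?thesis using assms(2) by blast
qed

lemma ex_input_place:
  assumes "P \<noteq> {}" "t \<in> T"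
  shows "\<exists>q\<in>P. post_trans F q = t"
proof -
  obtain p where p: "p \<in> P" using assms(1) by blast
  then have "(t, p) \<in> (F \<union> F\<inverse>)\<^sup>*" "t \<noteq> p"
    using net assms(2) places_transitions_disjoint by (auto simp: is_net_def)
  then obtain y where "(t, y) \<in> F \<or> (y, t) \<in> F" by (metis Un_iff converse_iff converse_rtranclE)
  then show ?thesis
  proof
    assume "(t, y) \<in> F"
    then have "y \<in> P" "pre_trans F y = t"
      using flow_subset places_transitions_disjoint assms(2) in_flow_to_place by auto
    \<comment> \<open>without input places, \<open>{t}\<close> would be backward closed\<close>
    then show ?thesis using backward_closed_no_exit[of "{t}" y] assms(2) by auto
  next
    assume yt: "(y, t) \<in> F"
    then have "y \<in> P" using flow_subset places_transitions_disjoint assms(2) by auto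
    then show ?thesis using yt in_flow_from_place by metis
  qed
qed

end

locale perpetual_tsys = live_bounded_tsys P T F \<mu>0 for P T :: "'a set" and F \<mu>0 +
  fixes t0 :: 'a
  assumes t0_in_T: "t0 \<in> T"
    and home: "home_marking T F \<mu>0 (mu_cl P (preset F t0))"
    and places_nonempty: "P \<noteq> {}"
begin

definition potential :: "('a \<Rightarrow> nat) \<Rightarrow> ('a \<Rightarrow> int) \<Rightarrow> bool" where
  "potential \<mu> Z \<longleftrightarrow> Z t0 = 0 \<and>
     (\<forall>p\<in>P. int (\<mu> p) = of_bool (post_trans F p = t0) + Z (pre_trans F p) - Z (post_trans F p))"

lemma ex_potential:
  assumes "reach T F \<mu>0 \<mu>"
  shows "\<exists>Z. potential \<mu> Z"
proof -
  obtain ts where ts: "firing_seq T F \<mu> ts (mu_cl P (preset F t0))"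
    using home assms by (auto simp: home_marking_def reach_iff_firing_seq)
  define Z where "Z t = int (count_list ts t0) - int (count_list ts t)" for t
  have "int (\<mu> p) = of_bool (post_trans F p = t0) + Z (pre_trans F p) - Z (post_trans F p)"
    if "p \<in> P" for p
  proof -
    have "int (mu_cl P (preset F t0) p) = of_bool (post_trans F p = t0)"
      using that preset_transition[OF t0_in_T] by (simp add: mu_cl_def)
    then show ?thesis using marking_equation[OF ts that] by (simp add: Z_def)
  qed
  then have "potential \<mu> Z" by (simp add: potential_def Z_def)
  then show ?thesis by blast
qed

lemma potential_le_0:
  assumes "reach T F \<mu>0 \<mu>" "potential \<mu> Z" "t \<in> T"
  shows "Z t \<le> 0"
proof (rule ccontr)
  assume pos: "\<not> Z t \<le> 0"
  define m where "m = Max (Z ` T)"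
  define M where "M = {s\<in>T. Z s = m}"
  have le_m: "Z s \<le> m" if "s \<in> T" for s
    using finite_T that by (simp add: m_def)
  have "m \<in> Z ` T"
    using finite_T assms(3) unfolding m_def by (intro Max_in) auto
  then obtain tm where tm: "tm \<in> M" by (auto simp: M_def)
  have "t0 \<notin> M"
    using le_m[OF assms(3)] pos assms(2) by (simp add: potential_def M_def)
  define S where "S = {p\<in>P. post_trans F p \<in> M}"
  have "S \<subseteq> P" by (auto simp: S_def)
  have S_empty_fed_by_M: "\<mu> p = 0 \<and> pre_trans F p \<in> M" if "p \<in> S" for p
  proof -
    have "int (\<mu> p) = Z (pre_trans F p) - m"
      using that \<open>t0 \<notin> M\<close> assms(2) by (auto simp: S_def M_def potential_def)
    moreover have "Z (pre_trans F p) \<le> m"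
      using le_m pre_trans_in_T that by (simp add: S_def)
    ultimately show ?thesis using pre_trans_in_T that by (auto simp: S_def M_def)
  qed
  have "siphon F S"
    unfolding siphon_iff[OF \<open>S \<subseteq> P\<close>]
  proof
    fix p assume "p \<in> S"
    then have "pre_trans F p \<in> M" using S_empty_fed_by_M by blast
    moreover obtain q where "q \<in> P" "post_trans F q = pre_trans F p"
      using ex_input_place[OF places_nonempty] pre_trans_in_T \<open>p \<in> S\<close> by (auto simp: S_def)
    ultimately show "\<exists>q\<in>S. post_trans F q = pre_trans F p" by (auto simp: S_def)
  qed
  then have "S = {}"
    using unmarked_siphon_empty[OF assms(1) \<open>S \<subseteq> P\<close>] S_empty_fed_by_M by blast
  moreover obtain q where "q \<in> P" "post_trans F q = tm"
    using ex_input_place[OF places_nonempty] tm by (auto simp: M_def)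
  ultimately show False using tm by (auto simp: S_def)
qed

lemma potential_ge_minus_1:
  assumes "reach T F \<mu>0 \<mu>" "potential \<mu> Z" "t \<in> T"
  shows "-1 \<le> Z t"
proof (rule ccontr)
  assume neg: "\<not> -1 \<le> Z t"
  define m where "m = Min (Z ` T)"
  define M where "M = {s\<in>T. Z s = m}"
  have ge_m: "m \<le> Z s" if "s \<in> T" for s
    using finite_T that by (simp add: m_def)
  have "m \<in> Z ` T"
    using finite_T assms(3) unfolding m_def by (intro Min_in) auto
  then obtain tm where tm: "tm \<in> M" by (auto simp: M_def)
  have "m \<le> -2" using ge_m[OF assms(3)] neg by simp
  then have "t0 \<notin> M" using assms(2) by (auto simp: potential_def M_def)
  then obtain p where p: "p \<in> P" "pre_trans F p \<in> M" "post_trans F p \<notin> M"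
    using strongly_connected_cut[of M tm t0] tm t0_in_T by (auto simp: M_def)
  have "m < Z (post_trans F p)"
    using ge_m[OF post_trans_in_T[OF p(1)]] post_trans_in_T[OF p(1)] p(3) by (force simp: M_def)
  moreover have "int (\<mu> p) = of_bool (post_trans F p = t0) + m - Z (post_trans F p)"
    using assms(2) p by (simp add: potential_def M_def)
  ultimately show False
    using \<open>m \<le> -2\<close> assms(2) by (cases "post_trans F p = t0") (auto simp: potential_def)
qed

lemma potential_cases:
  assumes "reach T F \<mu>0 \<mu>" "potential \<mu> Z" "t \<in> T"
  shows "Z t = -1 \<or> Z t = 0"
  using potential_le_0[OF assms] potential_ge_minus_1[OF assms] by linarith

lemma potential_marking:
  assumes "potential \<mu> Z" "q \<in> P" "post_trans F q \<noteq> t0"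
  shows "int (\<mu> q) = Z (pre_trans F q) - Z (post_trans F q)"
  using assms by (simp add: potential_def)

lemma en_eq_lagging_input:
  assumes "reach T F \<mu>0 \<mu>2" and Z1: "potential \<mu>1 Z1" and Z2: "potential \<mu>2 Z2"
    and "en T F \<mu>1 = en T F \<mu>2" and "s \<in> T" "Z1 s = -1" "Z2 s = 0"
  shows "\<exists>q\<in>P. post_trans F q = s \<and> \<mu>1 q = 0 \<and> Z1 (pre_trans F q) = -1 \<and> Z2 (pre_trans F q) = 0"
proof -
  have "s \<noteq> t0" using Z1 \<open>Z1 s = -1\<close> by (auto simp: potential_def)
  obtain q where q: "q \<in> P" "post_trans F q = s"
    using ex_input_place[OF places_nonempty \<open>s \<in> T\<close>] by blast
  then have "int (\<mu>2 q) = Z2 (pre_trans F q)"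
    using potential_marking[OF Z2] \<open>s \<noteq> t0\<close> \<open>Z2 s = 0\<close> by simp
  moreover have Z2_le_0: "Z2 (pre_trans F q) \<le> 0" if "q \<in> P" for q
    using potential_le_0[OF assms(1) Z2 pre_trans_in_T[OF that]] .
  ultimately have "\<not> enabled T F \<mu>2 s" using q by (force simp: enabled_iff)
  then have "\<not> enabled T F \<mu>1 s" using assms(4) by (simp add: en_def set_eq_iff)
  then obtain q where q: "q \<in> P" "post_trans F q = s" "\<mu>1 q = 0"
    using \<open>s \<in> T\<close> by (auto simp: enabled_iff)
  moreover have "Z1 (pre_trans F q) = -1"
    using potential_marking[OF Z1 q(1)] q \<open>s \<noteq> t0\<close> \<open>Z1 s = -1\<close> by simp
  moreover have "Z2 (pre_trans F q) = 0"
    using potential_marking[OF Z2 q(1)] q \<open>s \<noteq> t0\<close> \<open>Z2 s = 0\<close> Z2_le_0[OF q(1)] by simp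
  ultimately show ?thesis by blast
qed

lemma en_eq_potential_minus_1:
  assumes reach1: "reach T F \<mu>0 \<mu>1" and reach2: "reach T F \<mu>0 \<mu>2"
    and Z1: "potential \<mu>1 Z1" and Z2: "potential \<mu>2 Z2"
    and en_eq: "en T F \<mu>1 = en T F \<mu>2" and "t \<in> T" "Z1 t = -1"
  shows "Z2 t = -1"
proof (rule ccontr)
  assume "Z2 t \<noteq> -1"
  define A where "A = {s\<in>T. Z1 s = -1 \<and> Z2 s = 0}"
  have "t \<in> A"
    using \<open>t \<in> T\<close> \<open>Z1 t = -1\<close> \<open>Z2 t \<noteq> -1\<close> potential_cases[OF reach2 Z2] by (auto simp: A_def)
  have fed_from_A: "\<exists>q\<in>P. post_trans F q = s \<and> pre_trans F q \<in> A \<and> \<mu>1 q = 0" if "s \<in> A" for s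
    using en_eq_lagging_input[OF reach2 Z1 Z2 en_eq] that pre_trans_in_T by (fastforce simp: A_def)
  define S where "S = {q\<in>P. pre_trans F q \<in> A \<and> post_trans F q \<in> A}"
  have "S \<subseteq> P" by (auto simp: S_def)
  have "siphon F S"
    unfolding siphon_iff[OF \<open>S \<subseteq> P\<close>] using fed_from_A by (fastforce simp: S_def)
  moreover have "\<forall>q\<in>S. \<mu>1 q = 0"
  proof
    fix q assume "q \<in> S"
    then have "post_trans F q \<noteq> t0" using Z1 by (auto simp: S_def A_def potential_def)
    then have "int (\<mu>1 q) = Z1 (pre_trans F q) - Z1 (post_trans F q)"
      using potential_marking[OF Z1] \<open>q \<in> S\<close> by (simp add: S_def)
    then show "\<mu>1 q = 0" using \<open>q \<in> S\<close> by (simp add: S_def A_def)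
  qed
  ultimately have "S = {}" using unmarked_siphon_empty[OF reach1 \<open>S \<subseteq> P\<close>] by blast
  then show False using fed_from_A[OF \<open>t \<in> A\<close>] \<open>t \<in> A\<close> by (auto simp: S_def)
qed

lemma en_eq_imp_eq_on_places:
  assumes "reach T F \<mu>0 \<mu>1" "reach T F \<mu>0 \<mu>2" "en T F \<mu>1 = en T F \<mu>2" "p \<in> P"
  shows "\<mu>1 p = \<mu>2 p"
proof -
  obtain Z1 Z2 where Z1: "potential \<mu>1 Z1" and Z2: "potential \<mu>2 Z2"
    using ex_potential assms(1,2) by blast
  have "Z1 s = Z2 s" if "s \<in> T" for s
    using en_eq_potential_minus_1[OF assms(1,2) Z1 Z2 assms(3) that]
      en_eq_potential_minus_1[OF assms(2,1) Z2 Z1 assms(3)[symmetric] that]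
      potential_cases[OF assms(1) Z1 that] potential_cases[OF assms(2) Z2 that]
    by auto
  then have "int (\<mu>1 p) = int (\<mu>2 p)"
    using Z1 Z2 assms(4) pre_trans_in_T post_trans_in_T by (simp add: potential_def)
  then show ?thesis by simp
qed

end

theorem proposition5p2:
  fixes P T :: "'a set" and F :: "('a \<times> 'a) set"
    and \<mu>0 \<mu>1 \<mu>2 :: "'a \<Rightarrow> nat" and cl :: "'a set"
  assumes "is_Tnet P T F"
    and "is_marking P \<mu>0"
    and "perpetual P T F \<mu>0 cl"
    and "reach T F \<mu>0 \<mu>1"
    and "reach T F \<mu>0 \<mu>2"
    and "en T F \<mu>1 = en T F \<mu>2"
  shows "\<mu>1 = \<mu>2"
proof -
  interpret tnet P T F by unfold_locales (rule assms(1))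
  have "\<mu>1 p = \<mu>2 p" if "p \<in> P" for p
  proof -
    obtain x where "x \<in> P \<union> T" "cl = cluster P T F x"
      using assms(3) by (auto simp: perpetual_def)
    then obtain t0 where t0: "t0 \<in> T" "cl = insert t0 (preset F t0)"
      using cluster_eq_insert_preset by blast
    then have "mu_cl P cl = mu_cl P (preset F t0)"
      using places_transitions_disjoint by (auto simp: mu_cl_def fun_eq_iff)
    then interpret perpetual_tsys P T F \<mu>0 t0
      using assms(3) t0(1) that by unfold_locales (auto simp: perpetual_def)
    show ?thesis using en_eq_imp_eq_on_places assms(4-6) that by blast
  qed
  moreover have "is_marking P \<mu>1" "is_marking P \<mu>2"
    using reach_is_marking[OF net assms(2)] assms(4,5) by auto
  ultimately show ?thesis unfolding is_marking_def fun_eq_iff by metis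
qed

end
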